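(* Let $n\ge 2$ and let $H(t)$, $0\le t\le T$, be a piecewise-continuous time-dependent Hamiltonian on $n$ qubits which at every time is U(1)-invariant and 2-local. Then the phase $\Delta_3$ of the unitary it generates is an integer multiple of $2\pi$, i.e. $\Delta_3=0 \pmod{2\pi}$.
   Context: Qubits $1,\dots,n$, Hilbert space $(\mathbb{C}^2)^{\otimes n}$, $Z_j$ the Pauli $Z$ on qubit $j$. An operator is 2-local if it is a sum of terms each acting non-trivially on at most 2 qubits. For $m=0,\dots,n$, $\Pi_m$ is the projector onto the span of computational basis states with exactly $m$ qubits in state $|1\rangle$. A Hamiltonian is U(1)-invariant if it commutes with $\sum_j Z_j$. For a U(1)-invariant $H(t)$, $V=\mathcal{T}\exp(-i\int_0^T H(t)dt)$ (time-ordered exponential) satisfies $V=\bigoplus_{m=0}^n V_m$ with $V_m$ the restriction of $V$ to the range of $\Pi_m$; define $\theta_m=\arg\det(V_m)\in(-\pi,\pi]$ and $\Delta_3=\theta_{n-1}-\theta_1-(n-2)(\theta_n-\theta_0)\pmod{2\pi}$. *)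

theory Defs
  imports "HOL-Analysis.Analysis" "Jordan_Normal_Form.Determinant" "Jordan_Normal_Form.DL_Submatrix"
begin

text \<open>Qubits are indexed 0..n-1 (paper: 1..n). The computational basis state with index
  k < 2^n has qubit j in state |1> iff bit j of k is set.\<close>

definition qdim :: "nat \<Rightarrow> nat" where "qdim n = 2 ^ n"

definition pauliZ :: "nat \<Rightarrow> nat \<Rightarrow> complex mat" where
  "pauliZ n j = mat (qdim n) (qdim n) (\<lambda>(k,l). if k = l then (if bit k j then -1 else 1) else 0)"

definition totalZ :: "nat \<Rightarrow> complex mat" where
  "totalZ n = mat (qdim n) (qdim n) (\<lambda>(k,l). \<Sum>j<n. pauliZ n j $$ (k,l))"

definition u1_invariant :: "nat \<Rightarrow> complex mat \<Rightarrow> bool" where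
  "u1_invariant n A \<longleftrightarrow> A * totalZ n = totalZ n * A"

text \<open>A acts non-trivially only on the qubits in S: A = B_S \<otimes> identity on the other qubits.\<close>
definition acts_only_on :: "nat \<Rightarrow> nat set \<Rightarrow> complex mat \<Rightarrow> bool" where
  "acts_only_on n S A \<longleftrightarrow> A \<in> carrier_mat (qdim n) (qdim n) \<and>
     (\<exists>B :: (nat \<Rightarrow> bool) \<Rightarrow> (nat \<Rightarrow> bool) \<Rightarrow> complex.
        \<forall>k < qdim n. \<forall>l < qdim n.
          A $$ (k,l) = (if (\<forall>j<n. j \<notin> S \<longrightarrow> bit k j = bit l j)
                        then B (\<lambda>j. j \<in> S \<and> bit k j) (\<lambda>j. j \<in> S \<and> bit l j) else 0))"

definition two_local :: "nat \<Rightarrow> complex mat \<Rightarrow> bool" where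
  "two_local n A \<longleftrightarrow> A \<in> carrier_mat (qdim n) (qdim n) \<and>
     (\<exists>(N::nat) (terms :: nat \<Rightarrow> complex mat) (S :: nat \<Rightarrow> nat set).
        (\<forall>i<N. S i \<subseteq> {..<n} \<and> card (S i) \<le> 2 \<and> acts_only_on n (S i) (terms i)) \<and>
        (\<forall>k < qdim n. \<forall>l < qdim n. A $$ (k,l) = (\<Sum>i<N. terms i $$ (k,l))))"

definition hermitian_op :: "complex mat \<Rightarrow> bool" where
  "hermitian_op A \<longleftrightarrow> dim_row A = dim_col A \<and>
     (\<forall>k < dim_row A. \<forall>l < dim_row A. A $$ (l,k) = cnj (A $$ (k,l)))"

text \<open>Piecewise continuity of a function on [a,b]: finitely many break points, and on each
  open interval avoiding them the function agrees with a function continuous on the closed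
  interval (so one-sided limits exist at the break points).\<close>
definition piecewise_cont_on :: "real \<Rightarrow> real \<Rightarrow> (real \<Rightarrow> 'a::topological_space) \<Rightarrow> bool" where
  "piecewise_cont_on a b f \<longleftrightarrow> (\<exists>P. finite P \<and>
     (\<forall>c d. a \<le> c \<and> c < d \<and> d \<le> b \<and> {c<..<d} \<inter> P = {} \<longrightarrow>
        (\<exists>g. continuous_on {c..d} g \<and> (\<forall>t\<in>{c<..<d}. g t = f t))))"

text \<open>V is the time-ordered exponential T exp(-i \<integral>_0^T H): the (unique) continuous solution of
  V'(t) = -i H(t) V(t), V(0) = I, where the ODE holds off a finite set of times.\<close>
definition time_ordered_exp :: "nat \<Rightarrow> real \<Rightarrow> (real \<Rightarrow> complex mat) \<Rightarrow> (real \<Rightarrow> complex mat) \<Rightarrow> bool" where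
  "time_ordered_exp n T H V \<longleftrightarrow>
     (\<forall>t\<in>{0..T}. V t \<in> carrier_mat (qdim n) (qdim n)) \<and>
     V 0 = 1\<^sub>m (qdim n) \<and>
     (\<forall>k < qdim n. \<forall>l < qdim n. continuous_on {0..T} (\<lambda>s. V s $$ (k,l))) \<and>
     (\<exists>E. finite E \<and> (\<forall>t\<in>{0<..<T} - E. \<forall>k < qdim n. \<forall>l < qdim n.
        ((\<lambda>s. V s $$ (k,l)) has_vector_derivative ((- \<i>) * ((H t * V t) $$ (k,l)))) (at t)))"

text \<open>Basis indices with exactly m qubits in state |1> (range of Pi_m).\<close>
definition sector :: "nat \<Rightarrow> nat \<Rightarrow> nat set" where
  "sector n m = {k. k < qdim n \<and> card {j. j < n \<and> bit k j} = m}"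

text \<open>V_m: restriction of V to the range of Pi_m, written in the computational basis.\<close>
definition block :: "nat \<Rightarrow> complex mat \<Rightarrow> nat \<Rightarrow> complex mat" where
  "block n V m = submatrix V (sector n m) (sector n m)"

definition theta :: "nat \<Rightarrow> complex mat \<Rightarrow> nat \<Rightarrow> real" where
  "theta n V m = Arg (det (block n V m))"

definition Delta3 :: "nat \<Rightarrow> complex mat \<Rightarrow> real" where
  "Delta3 n V = theta n V (n - 1) - theta n V 1 - (real n - 2) * (theta n V n - theta n V 0)"

end

theory Submission
  imports Defs
begin

text \<open>Since H(t) commutes with the total charge, it is block diagonal with respect to the
  sectors, so by Jacobi's formula each d_m = det V_m solves d_m' = -i tr_m(H) d_m, where tr_m is
  the trace over sector m. As tr_m(H) is real, |d_m| = 1 and theta_m = arg d_m. For a term acting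
  on a set S of at most two qubits, tr_m depends only on how the m-element sets of qubits meet S,
  and counting gives tr_{n-1} - tr_1 + (n - 2)(tr_0 - tr_n) = 0. Hence the product
  d_{n-1} conj(d_1) (d_0 conj(d_n))^(n-2) stays equal to 1, and its argument is Delta_3.\<close>

definition principal_minor :: "nat set \<Rightarrow> 'a::comm_ring_1 mat \<Rightarrow> 'a" where
  "principal_minor S W = det (mat (card S) (card S) (\<lambda>(a,b). W $$ (pick S a, pick S b)))"

lemma bij_betw_pick: "finite S \<Longrightarrow> bij_betw (pick S) {..<card S} S"
proof -
  assume S: "finite S"
  have "strict_mono_on {..<card S} (pick S)"
    by (rule strict_mono_onI) (simp add: pick_mono)
  then have inj: "inj_on (pick S) {..<card S}"
    by (rule strict_mono_on_imp_inj_on)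
  moreover have "pick S ` {..<card S} = S"
    using card_subset_eq[OF S, of "pick S ` {..<card S}"] card_image[OF inj] pick_in_set
    by auto
  ultimately show ?thesis by (simp add: bij_betw_def)
qed

lemma sum_pick: "finite S \<Longrightarrow> (\<Sum>k\<in>S. h k) = (\<Sum>a<card S. h (pick S a))"
  using sum.reindex_bij_betw[OF bij_betw_pick, of S h] by simp

lemma det_submatrix_eq_principal_minor:
  fixes W :: "'a::comm_ring_1 mat"
  assumes "W \<in> carrier_mat q q" "S \<subseteq> {..<q}"
  shows "det (submatrix W S S) = principal_minor S W"
proof -
  have "{i. i < q \<and> i \<in> S} = S" using assms(2) by auto
  then show ?thesis using assms(1) by (simp add: submatrix_def principal_minor_def)
qed

lemma principal_minor_one:
  assumes "S \<subseteq> {..<q}"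
  shows "principal_minor S (1\<^sub>m q :: 'a::comm_ring_1 mat) = 1"
proof -
  have fin: "finite S" using assms finite_subset by blast
  have "pick S a < q" if "a < card S" for a
    using assms pick_in_set[of a S] that by auto
  moreover have "pick S a = pick S b \<longleftrightarrow> a = b" if "a < card S" "b < card S" for a b
    using bij_betw_imp_inj_on[OF bij_betw_pick[OF fin]] that by (auto simp: inj_on_def)
  ultimately have identity: "mat (card S) (card S) (\<lambda>(a,b). 1\<^sub>m q $$ (pick S a, pick S b)) = 1\<^sub>m (card S)"
    by (auto simp: one_mat_def)
  show ?thesis unfolding principal_minor_def identity by simp
qed

lemma det_mat_Leibniz:
  "det (mat N N (\<lambda>(i,j). f i j)) = (\<Sum>p | p permutes {0..<N}. signof p * (\<Prod>i<N. f i (p i)))"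
proof -
  have "det (mat N N (\<lambda>(i,j). f i j)) =
      (\<Sum>p | p permutes {0..<N}. signof p * (\<Prod>i\<in>{0..<N}. mat N N (\<lambda>(i,j). f i j) $$ (i, p i)))"
    by (rule det_def') simp
  also have "\<dots> = (\<Sum>p | p permutes {0..<N}. signof p * (\<Prod>i<N. f i (p i)))"
    by (intro sum.cong refl arg_cong[where f="\<lambda>x. signof _ * x"] prod.cong)
      (auto simp: permutes_in_image)
  finally show ?thesis .
qed

lemma has_vector_derivative_prod:
  fixes f :: "'i \<Rightarrow> real \<Rightarrow> 'a::{real_normed_field}"
  assumes "\<And>i. i \<in> I \<Longrightarrow> (f i has_vector_derivative f' i) (at t)"
  shows "((\<lambda>s. \<Prod>i\<in>I. f i s) has_vector_derivative (\<Sum>i\<in>I. f' i * (\<Prod>j\<in>I - {i}. f j t))) (at t)"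
proof -
  have "((\<lambda>s. \<Prod>i\<in>I. f i s) has_derivative (\<lambda>y. \<Sum>i\<in>I. (y *\<^sub>R f' i) * (\<Prod>j\<in>I - {i}. f j t))) (at t)"
    using assms by (intro has_derivative_prod) (auto simp: has_vector_derivative_def)
  then show ?thesis
    by (simp add: has_vector_derivative_def scaleR_sum_right)
qed

text \<open>Differentiating the Leibniz expansion row by row replaces row \<open>i\<close> by \<open>\<Sum>c. M i c \<cdot> row c\<close>;
  only the term \<open>c = i\<close> survives, the others having two equal rows.\<close>
lemma has_vector_derivative_det_mat:
  fixes f :: "real \<Rightarrow> nat \<Rightarrow> nat \<Rightarrow> 'a::real_normed_field"
  assumes "\<And>i j. i < N \<Longrightarrow> j < N \<Longrightarrow>
      ((\<lambda>s. f s i j) has_vector_derivative (\<Sum>c<N. M i c * f t c j)) (at t)"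
  shows "((\<lambda>s. det (mat N N (\<lambda>(i,j). f s i j))) has_vector_derivative
      ((\<Sum>i<N. M i i) * det (mat N N (\<lambda>(i,j). f t i j)))) (at t)"
proof -
  let ?P = "{p. p permutes {0..<N}}"
  let ?det = "\<lambda>g. det (mat N N (\<lambda>(i,j). g i j))"
  define row_replaced where "row_replaced i c = (\<lambda>a b. if a = i then f t c b else f t a b)" for i c
  have prod_row_replaced: "(\<Prod>j<N. row_replaced i c j (p j)) = f t c (p i) * (\<Prod>j\<in>{..<N} - {i}. f t j (p j))"
    if "i < N" for i c p
  proof -
    have "(\<Prod>j\<in>{..<N} - {i}. row_replaced i c j (p j)) = (\<Prod>j\<in>{..<N} - {i}. f t j (p j))"
      by (intro prod.cong) (auto simp: row_replaced_def)
    then show ?thesis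
      using that prod.remove[of "{..<N}" i "\<lambda>j. row_replaced i c j (p j)"] by (simp add: row_replaced_def)
  qed
  have "((\<lambda>s. \<Prod>i<N. f s i (p i)) has_vector_derivative
      (\<Sum>i<N. (\<Sum>c<N. M i c * f t c (p i)) * (\<Prod>j\<in>{..<N} - {i}. f t j (p j)))) (at t)"
    if "p \<in> ?P" for p
    using that by (intro has_vector_derivative_prod assms) (auto simp: permutes_in_image)
  then have "((\<lambda>s. ?det (f s)) has_vector_derivative
      (\<Sum>p\<in>?P. signof p * (\<Sum>i<N. (\<Sum>c<N. M i c * f t c (p i)) * (\<Prod>j\<in>{..<N} - {i}. f t j (p j))))) (at t)"
    unfolding det_mat_Leibniz by (intro has_vector_derivative_sum has_vector_derivative_mult_right)
  also have "(\<Sum>p\<in>?P. signof p * (\<Sum>i<N. (\<Sum>c<N. M i c * f t c (p i)) * (\<Prod>j\<in>{..<N} - {i}. f t j (p j))))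
      = (\<Sum>i<N. \<Sum>c<N. M i c * (\<Sum>p\<in>?P. signof p * (\<Prod>j<N. row_replaced i c j (p j))))"
    by (simp add: prod_row_replaced sum_distrib_left sum_distrib_right sum.swap[of _ ?P] mult_ac)
  also have "\<dots> = (\<Sum>i<N. \<Sum>c<N. M i c * ?det (row_replaced i c))"
    unfolding det_mat_Leibniz ..
  also have "\<dots> = (\<Sum>i<N. M i i * ?det (f t))"
  proof (intro sum.cong refl)
    fix i assume i: "i \<in> {..<N}"
    have "?det (row_replaced i c) = 0" if "c \<in> {..<N} - {i}" for c
      using i that by (intro det_identical_rows[of _ N i c]) (auto simp: row_def row_replaced_def)
    then have "(\<Sum>c<N. M i c * ?det (row_replaced i c)) = M i i * ?det (row_replaced i i)"
      using i sum.remove[of "{..<N}" i "\<lambda>c. M i c * ?det (row_replaced i c)"] by simp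
    moreover have "row_replaced i i = f t" by (auto simp: row_replaced_def fun_eq_iff)
    ultimately show "(\<Sum>c<N. M i c * ?det (row_replaced i c)) = M i i * ?det (f t)" by simp
  qed
  finally show ?thesis by (simp add: sum_distrib_right)
qed

lemma continuous_on_principal_minor:
  fixes W :: "'b::topological_space \<Rightarrow> complex mat"
  assumes "\<And>k l. k \<in> S \<Longrightarrow> l \<in> S \<Longrightarrow> continuous_on X (\<lambda>s. W s $$ (k,l))"
  shows "continuous_on X (\<lambda>s. principal_minor S (W s))"
  unfolding principal_minor_def det_mat_Leibniz
  by (intro continuous_intros assms pick_in_set) (auto simp: permutes_in_image)

text \<open>As \<open>A\<close> maps no index of \<open>S\<close> outside \<open>S\<close>, the \<open>S\<close>-block of \<open>W\<close> evolves on its own.\<close>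
lemma has_vector_derivative_principal_minor:
  fixes W :: "real \<Rightarrow> complex mat"
  assumes A: "A \<in> carrier_mat q q" and W: "W t \<in> carrier_mat q q" and S: "S \<subseteq> {..<q}"
    and block: "\<And>k j. k \<in> S \<Longrightarrow> j < q \<Longrightarrow> j \<notin> S \<Longrightarrow> A $$ (k,j) = 0"
    and W_deriv: "\<And>k l. k \<in> S \<Longrightarrow> l \<in> S \<Longrightarrow>
      ((\<lambda>s. W s $$ (k,l)) has_vector_derivative (c * (A * W t) $$ (k,l))) (at t)"
  shows "((\<lambda>s. principal_minor S (W s)) has_vector_derivative
      ((c * (\<Sum>k\<in>S. A $$ (k,k))) * principal_minor S (W t))) (at t)"
proof -
  have fin: "finite S" using S finite_subset by blast
  let ?p = "pick S" and ?N = "card S"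
  have p: "?p a \<in> S" if "a < ?N" for a using that by (simp add: pick_in_set)
  define M where "M a b = c * A $$ (?p a, ?p b)" for a b
  have "((\<lambda>s. W s $$ (?p a, ?p b)) has_vector_derivative (\<Sum>d<?N. M a d * W t $$ (?p d, ?p b))) (at t)"
    if ab: "a < ?N" "b < ?N" for a b
  proof -
    have "?p a < q" "?p b < q" using S p ab by auto
    then have "(A * W t) $$ (?p a, ?p b) = (\<Sum>j<q. A $$ (?p a, j) * W t $$ (j, ?p b))"
      using A W by (simp add: scalar_prod_def atLeast0LessThan)
    also have "\<dots> = (\<Sum>j\<in>S. A $$ (?p a, j) * W t $$ (j, ?p b))"
      using S block[OF p[OF ab(1)]] by (intro sum.mono_neutral_right) auto
    also have "\<dots> = (\<Sum>d<?N. A $$ (?p a, ?p d) * W t $$ (?p d, ?p b))"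
      by (rule sum_pick[OF fin])
    finally show ?thesis
      using W_deriv[OF p[OF ab(1)] p[OF ab(2)]] by (simp add: M_def sum_distrib_left mult.assoc)
  qed
  then have "((\<lambda>s. principal_minor S (W s)) has_vector_derivative
      ((\<Sum>a<?N. M a a) * principal_minor S (W t))) (at t)"
    unfolding principal_minor_def by (rule has_vector_derivative_det_mat)
  moreover have "(\<Sum>a<?N. M a a) = c * (\<Sum>k\<in>S. A $$ (k,k))"
    unfolding M_def sum_pick[OF fin, of "\<lambda>k. A $$ (k,k)"] by (simp add: sum_distrib_left)
  ultimately show ?thesis by simp
qed

lemma vector_derivative_zero_imp_endpoints_eq:
  fixes F :: "real \<Rightarrow> 'a::banach"
  assumes "finite E" "a \<le> b" "continuous_on {a..b} F"
    and "\<And>t. t \<in> {a<..<b} - E \<Longrightarrow> (F has_vector_derivative 0) (at t)"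
  shows "F b = F a"
proof (rule has_derivative_zero_unique_strong_interval[of "E \<union> {a,b}" a b F])
  fix t assume "t \<in> {a..b} - (E \<union> {a,b})"
  then have "(F has_vector_derivative 0) (at t)" using assms(4) by auto
  then show "(F has_derivative (\<lambda>h. 0)) (at t within {a..b})"
    by (auto simp: has_vector_derivative_def intro: has_derivative_at_withinI)
qed (use assms in auto)

lemma has_vector_derivative_mult_proportional:
  fixes F G :: "real \<Rightarrow> complex"
  assumes "(F has_vector_derivative (\<alpha> * F t)) (at t)" "(G has_vector_derivative (\<beta> * G t)) (at t)"
  shows "((\<lambda>s. F s * G s) has_vector_derivative ((\<alpha> + \<beta>) * (F t * G t))) (at t)"
  using has_vector_derivative_mult[OF assms] by (simp add: algebra_simps)

lemma has_vector_derivative_cnj_proportional: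
  fixes F :: "real \<Rightarrow> complex"
  assumes "(F has_vector_derivative (\<alpha> * F t)) (at t)"
  shows "((\<lambda>s. cnj (F s)) has_vector_derivative (cnj \<alpha> * cnj (F t))) (at t)"
  using has_vector_derivative_cnj[OF assms] by simp

lemma has_vector_derivative_power_proportional:
  fixes F :: "real \<Rightarrow> complex"
  assumes "(F has_vector_derivative (\<alpha> * F t)) (at t)"
  shows "((\<lambda>s. F s ^ k) has_vector_derivative ((of_nat k * \<alpha>) * (F t ^ k))) (at t)"
proof (induction k)
  case (Suc k)
  from has_vector_derivative_mult_proportional[OF assms Suc] show ?case
    by (simp add: algebra_simps)
qed simp

lemma norm_eq_1_if_imaginary_rate:
  fixes F :: "real \<Rightarrow> complex"
  assumes "finite E" "0 \<le> T" "continuous_on {0..T} F" "F 0 = 1"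
    and "\<And>t. t \<in> {0<..<T} - E \<Longrightarrow> (F has_vector_derivative (\<alpha> t * F t)) (at t) \<and> cnj (\<alpha> t) = - \<alpha> t"
  shows "cmod (F T) = 1"
proof -
  have "F T * cnj (F T) = F 0 * cnj (F 0)"
  proof (rule vector_derivative_zero_imp_endpoints_eq[of E, where F="\<lambda>s. F s * cnj (F s)"])
    fix t assume t: "t \<in> {0<..<T} - E"
    then have "((\<lambda>s. F s * cnj (F s)) has_vector_derivative ((\<alpha> t + cnj (\<alpha> t)) * (F t * cnj (F t)))) (at t)"
      using assms(5) by (intro has_vector_derivative_mult_proportional has_vector_derivative_cnj_proportional) auto
    then show "((\<lambda>s. F s * cnj (F s)) has_vector_derivative 0) (at t)"
      using assms(5)[OF t] by simp
  qed (use assms in \<open>auto intro!: continuous_intros\<close>)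
  also have "\<dots> = 1" using assms(4) by simp
  finally have "complex_of_real ((cmod (F T))\<^sup>2) = 1"
    by (simp only: complex_norm_square)
  then have "(cmod (F T))\<^sup>2 = 1" by (simp only: of_real_eq_1_iff)
  then show ?thesis using norm_ge_zero[of "F T"] by (auto simp: power2_eq_1_iff)
qed

lemma phase_product_eq_1:
  fixes F \<alpha> :: "'i \<Rightarrow> real \<Rightarrow> complex"
  assumes "finite E" "0 \<le> T"
    and "\<And>i. continuous_on {0..T} (F i)" "\<And>i. F i 0 = 1"
    and "\<And>i t. t \<in> {0<..<T} - E \<Longrightarrow> (F i has_vector_derivative (\<alpha> i t * F i t)) (at t)"
    and "\<And>t. t \<in> {0<..<T} - E \<Longrightarrow> \<alpha> a t + cnj (\<alpha> b t) + of_nat k * (\<alpha> c t + cnj (\<alpha> d t)) = 0"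
  shows "F a T * cnj (F b T) * (F c T * cnj (F d T)) ^ k = 1"
proof -
  let ?Q = "\<lambda>s. F a s * cnj (F b s) * (F c s * cnj (F d s)) ^ k"
  have "?Q T = ?Q 0"
  proof (rule vector_derivative_zero_imp_endpoints_eq[of E])
    fix t assume t: "t \<in> {0<..<T} - E"
    have "(?Q has_vector_derivative
        ((\<alpha> a t + cnj (\<alpha> b t) + of_nat k * (\<alpha> c t + cnj (\<alpha> d t))) * ?Q t)) (at t)"
      using assms(5)[OF t] by (intro has_vector_derivative_mult_proportional
          has_vector_derivative_cnj_proportional has_vector_derivative_power_proportional)
        (simp_all add: algebra_simps)
    then show "(?Q has_vector_derivative 0) (at t)" using assms(6)[OF t] by simp
  qed (use assms in \<open>auto intro!: continuous_intros\<close>)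
  then show ?thesis using assms(4) by simp
qed

lemma Arg_combination_in_2pi_Ints:
  assumes "cmod w = 1" "cmod x = 1" "cmod y = 1" "cmod z = 1"
    and "w * cnj x * (y * cnj z) ^ k = 1"
  shows "\<exists>m::int. Arg w - Arg x - real k * (Arg z - Arg y) = 2 * pi * of_int m"
proof -
  have polar: "u = exp (\<i> * of_real (Arg u))" if "cmod u = 1" for u
  proof -
    have "u \<noteq> 0" using that by auto
    then show ?thesis using that cis_Arg[of u] by (simp add: sgn_div_norm cis_conv_exp)
  qed
  let ?d = "Arg w - Arg x - real k * (Arg z - Arg y)"
  have "w * cnj x * (y * cnj z) ^ k = exp (\<i> * of_real (Arg w)) * cnj (exp (\<i> * of_real (Arg x)))
      * (exp (\<i> * of_real (Arg y)) * cnj (exp (\<i> * of_real (Arg z)))) ^ k"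
    using polar assms(1-4) by metis
  also have "\<dots> = exp (\<i> * of_real ?d)"
    by (simp add: exp_cnj exp_add[symmetric] exp_diff[symmetric] exp_of_nat_mult[symmetric] algebra_simps)
  finally have "exp (\<i> * of_real ?d) = 1" using assms(5) by simp
  then obtain m :: int where "?d = of_int (2 * m) * pi"
    by (auto simp: exp_eq_1)
  then show ?thesis by (intro exI[of _ m]) simp
qed

definition excited_qubits :: "nat \<Rightarrow> nat \<Rightarrow> nat set" where
  "excited_qubits n k = {j. j < n \<and> bit k j}"

lemma inj_on_excited_qubits: "inj_on (excited_qubits n) {..<2^n}"
proof (rule inj_onI)
  fix k l :: nat assume "k \<in> {..<2^n}" "l \<in> {..<2^n}" and eq: "excited_qubits n k = excited_qubits n l"
  then have "take_bit n k = k" "take_bit n l = l" by (auto simp: take_bit_nat_eq_self_iff)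
  moreover have "bit (take_bit n k) j = bit (take_bit n l) j" for j
    using eq by (auto simp: excited_qubits_def bit_take_bit_iff set_eq_iff)
  ultimately show "k = l" by (metis bit_eqI)
qed

lemma excited_qubits_image: "excited_qubits n ` {..<2^n} = Pow {..<n}"
proof (rule card_subset_eq)
  show "excited_qubits n ` {..<2^n} \<subseteq> Pow {..<n}" by (auto simp: excited_qubits_def)
  show "card (excited_qubits n ` {..<2^n}) = card (Pow {..<n})"
    using inj_on_excited_qubits[of n] by (simp add: card_image card_Pow)
qed simp

lemma sector_excited_qubits: "sector n m = {k. k < 2^n \<and> card (excited_qubits n k) = m}"
  by (simp add: sector_def excited_qubits_def qdim_def)

lemma sector_subset: "sector n m \<subseteq> {..<qdim n}"
  by (auto simp: sector_def)

lemma sector_less_qdim: "k \<in> sector n m \<Longrightarrow> k < qdim n"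
  by (simp add: sector_def)

lemma sum_sector_excited_qubits:
  "(\<Sum>k\<in>sector n m. h (excited_qubits n k)) = (\<Sum>A | A \<subseteq> {..<n} \<and> card A = m. h A)"
proof -
  have "inj_on (excited_qubits n) (sector n m)"
    by (rule inj_on_subset[OF inj_on_excited_qubits]) (auto simp: sector_excited_qubits)
  moreover have "excited_qubits n ` sector n m = {A. A \<subseteq> {..<n} \<and> card A = m}"
  proof (intro equalityI subsetI)
    fix A assume A: "A \<in> {A. A \<subseteq> {..<n} \<and> card A = m}"
    then obtain k where "k < 2^n" "A = excited_qubits n k"
      using excited_qubits_image[of n] by (metis (no_types, lifting) Pow_iff imageE lessThan_iff mem_Collect_eq)
    with A show "A \<in> excited_qubits n ` sector n m" by (auto simp: sector_excited_qubits)
  qed (auto simp: sector_excited_qubits excited_qubits_def)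
  ultimately show ?thesis using sum.reindex[of "excited_qubits n" "sector n m" h] by simp
qed

lemma subsets_card_0: "{A. A \<subseteq> {..<n::nat} \<and> card A = 0} = {{}}"
  using finite_subset[of _ "{..<n}"] by auto

lemma subsets_card_self: "{A. A \<subseteq> {..<n::nat} \<and> card A = n} = {{..<n}}"
  using card_subset_eq[OF finite_lessThan, of _ n] by auto

lemma subsets_card_1: "{A. A \<subseteq> {..<n::nat} \<and> card A = 1} = (\<lambda>j. {j}) ` {..<n}"
  by (auto simp: card_1_singleton_iff)

lemma subsets_card_minus_1:
  assumes "1 \<le> (n::nat)"
  shows "{A. A \<subseteq> {..<n} \<and> card A = n - 1} = (\<lambda>j. {..<n} - {j}) ` {..<n}"
proof (intro equalityI subsetI)
  fix A assume "A \<in> {A. A \<subseteq> {..<n} \<and> card A = n - 1}"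
  then have A: "A \<subseteq> {..<n}" "card A = n - 1" by auto
  then have "card ({..<n} - A) = 1"
    using assms by (simp add: card_Diff_subset finite_subset[OF A(1)])
  then obtain j where "{..<n} - A = {j}" by (rule card_1_singletonE)
  with A(1) show "A \<in> (\<lambda>j. {..<n} - {j}) ` {..<n}" by auto
qed auto

lemma sum_if_mem:
  fixes h :: "nat \<Rightarrow> 'a::comm_ring_1"
  assumes "S \<subseteq> {..<n}"
  shows "(\<Sum>j<n. if j \<in> S then h j else c) = (\<Sum>j\<in>S. h j) + of_nat (n - card S) * c"
proof -
  have "finite S" using assms finite_subset by blast
  then show ?thesis
    using assms sum.subset_diff[of S "{..<n}" "\<lambda>j. if j \<in> S then h j else c"]
    by (simp add: card_Diff_subset)
qed

text \<open>\<open>F m\<close> sees a subset \<open>A\<close> only through \<open>S \<inter> A\<close>; evaluating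
  \<open>F\<close> at \<open>0, 1, n - 1, n\<close> explicitly, the combination vanishes whenever \<open>card S \<le> 2\<close>
  (for \<open>card S = 3\<close> and \<open>G X = (if X = S then 1 else 0)\<close> it equals \<open>-1\<close>).\<close>
lemma sum_subsets_local_identity:
  fixes G :: "nat set \<Rightarrow> 'a::comm_ring_1"
  assumes S: "S \<subseteq> {..<n}" "card S \<le> 2" and n: "2 \<le> n"
  defines "F \<equiv> \<lambda>m. \<Sum>A | A \<subseteq> {..<n} \<and> card A = m. G (S \<inter> A)"
  shows "F (n - 1) - F 1 + of_nat (n - 2) * (F 0 - F n) = 0"
proof -
  have fin: "finite S" using S finite_subset by blast
  have F0: "F 0 = G {}" unfolding F_def subsets_card_0 by simp
  have Fn: "F n = G S" unfolding F_def subsets_card_self using S by (simp add: Int_absorb2)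
  have "F 1 = (\<Sum>j<n. G (S \<inter> {j}))"
    unfolding F_def subsets_card_1 by (subst sum.reindex) (auto simp: inj_on_def)
  also have "\<dots> = (\<Sum>j<n. if j \<in> S then G {j} else G {})" by (intro sum.cong) auto
  finally have F1: "F 1 = (\<Sum>j\<in>S. G {j}) + of_nat (n - card S) * G {}"
    using sum_if_mem[OF S(1)] by simp
  have "F (n - 1) = (\<Sum>j<n. G (S \<inter> ({..<n} - {j})))"
    unfolding F_def subsets_card_minus_1[OF order_trans[OF one_le_numeral n]]
    by (subst sum.reindex) (auto simp: inj_on_def)
  also have "\<dots> = (\<Sum>j<n. if j \<in> S then G (S - {j}) else G S)"
    using S by (intro sum.cong refl) (auto intro!: arg_cong[where f=G])
  finally have Fn1: "F (n - 1) = (\<Sum>j\<in>S. G (S - {j})) + of_nat (n - card S) * G S"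
    using sum_if_mem[OF S(1)] by simp
  have "of_nat (n - card S) = (of_nat n - of_nat (card S) :: 'a)" "of_nat (n - 2) = (of_nat n - 2 :: 'a)"
    using S n by (simp_all add: of_nat_diff)
  note counts = F0 Fn F1 Fn1 this
  consider "S = {}" | a where "S = {a}" | a b where "S = {a,b}" "a \<noteq> b"
  proof -
    have "card S = 0 \<or> card S = 1 \<or> card S = 2" using S(2) by auto
    then show thesis using that fin by (metis card_0_eq card_1_singletonE card_2_iff)
  qed
  then show ?thesis
  proof cases
    case 1
    then show ?thesis unfolding counts by (simp add: algebra_simps)
  next
    case 2
    then show ?thesis unfolding counts by (simp add: algebra_simps)
  next
    case (3 a b)
    then have "{a,b} - {a} = {b}" "{a,b} - {b} = {a}" by auto
    with 3 show ?thesis unfolding counts by (simp add: algebra_simps)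
  qed
qed

lemma totalZ_entry:
  assumes "k < qdim n" "l < qdim n"
  shows "totalZ n $$ (k,l) = (if k = l then of_nat n - 2 * of_nat (card (excited_qubits n k)) else 0)"
proof (cases "k = l")
  case True
  have excited_qubits: "excited_qubits n k \<subseteq> {..<n}" by (auto simp: excited_qubits_def)
  then have "card (excited_qubits n k) \<le> n" using card_mono[of "{..<n}"] by fastforce
  moreover have "totalZ n $$ (k,k) = (\<Sum>j<n. if j \<in> excited_qubits n k then -1 else 1)"
    using assms unfolding totalZ_def pauliZ_def excited_qubits_def by (auto intro!: sum.cong)
  ultimately show ?thesis
    using True sum_if_mem[OF excited_qubits, of "\<lambda>_. -1" 1] by (simp add: of_nat_diff)
qed (use assms in \<open>simp add: totalZ_def pauliZ_def\<close>)

text \<open>\<open>totalZ n\<close> is diagonal with entry \<open>n - 2 \<cdot> card (excited_qubits n k)\<close> at \<open>k\<close>, and these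
  entries separate the sectors.\<close>
lemma u1_invariant_block_diagonal:
  fixes A :: "complex mat"
  assumes u1: "u1_invariant n A" and A: "A \<in> carrier_mat (qdim n) (qdim n)"
    and k: "k \<in> sector n m" and l: "l < qdim n" "l \<notin> sector n m"
  shows "A $$ (k,l) = 0"
proof -
  define z where "z k = (of_nat n - 2 * of_nat (card (excited_qubits n k)) :: complex)" for k
  have kq: "k < qdim n" using k sector_subset by auto
  have Z: "totalZ n \<in> carrier_mat (qdim n) (qdim n)" by (simp add: totalZ_def)
  have "(A * totalZ n) $$ (k,l) = (\<Sum>i<qdim n. A $$ (k,i) * totalZ n $$ (i,l))"
    using A Z kq l by (simp add: scalar_prod_def atLeast0LessThan)
  also have "\<dots> = (\<Sum>i<qdim n. if i = l then A $$ (k,l) * z l else 0)"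
    using kq l by (intro sum.cong refl) (auto simp: totalZ_entry z_def)
  also have "\<dots> = A $$ (k,l) * z l" using l by simp
  finally have right: "(A * totalZ n) $$ (k,l) = A $$ (k,l) * z l" .
  have "(totalZ n * A) $$ (k,l) = (\<Sum>i<qdim n. totalZ n $$ (k,i) * A $$ (i,l))"
    using A Z kq l by (simp add: scalar_prod_def atLeast0LessThan)
  also have "\<dots> = (\<Sum>i<qdim n. if i = k then z k * A $$ (k,l) else 0)"
    using kq l by (intro sum.cong refl) (auto simp: totalZ_entry z_def)
  also have "\<dots> = z k * A $$ (k,l)" using kq by simp
  finally have "A $$ (k,l) * z l = z k * A $$ (k,l)"
    using right u1 unfolding u1_invariant_def by metis
  moreover have "card (excited_qubits n k) \<noteq> card (excited_qubits n l)"
    using k l by (auto simp: sector_def excited_qubits_def)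
  then have "z l \<noteq> z k" by (simp add: z_def)
  ultimately show ?thesis by (simp add: algebra_simps)
qed

definition sector_trace :: "nat \<Rightarrow> complex mat \<Rightarrow> nat \<Rightarrow> complex" where
  "sector_trace n A m = (\<Sum>k\<in>sector n m. A $$ (k,k))"

lemma hermitian_sector_trace_real:
  assumes "hermitian_op A" "A \<in> carrier_mat (qdim n) (qdim n)"
  shows "cnj (sector_trace n A m) = sector_trace n A m"
proof -
  have "cnj (A $$ (k,k)) = A $$ (k,k)" if "k \<in> sector n m" for k
  proof -
    have "k < dim_row A" using assms(2) that sector_subset by auto
    then show ?thesis using assms(1) unfolding hermitian_op_def by (metis complex_cnj_cnj)
  qed
  then show ?thesis unfolding sector_trace_def cnj_sum by (rule sum.cong[OF refl])
qed

lemma acts_only_on_sector_trace_identity: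
  assumes "acts_only_on n S A" "S \<subseteq> {..<n}" "card S \<le> 2" "2 \<le> n"
  shows "sector_trace n A (n - 1) - sector_trace n A 1
      + of_nat (n - 2) * (sector_trace n A 0 - sector_trace n A n) = 0"
proof -
  obtain B where B: "\<And>k. k < qdim n \<Longrightarrow> A $$ (k,k) = B (\<lambda>j. j \<in> S \<and> bit k j) (\<lambda>j. j \<in> S \<and> bit k j)"
    using assms(1) unfolding acts_only_on_def by fastforce
  define G where "G X = B (\<lambda>j. j \<in> X) (\<lambda>j. j \<in> X)" for X
  have "A $$ (k,k) = G (S \<inter> excited_qubits n k)" if "k < qdim n" for k
  proof -
    have "(\<lambda>j. j \<in> S \<and> bit k j) = (\<lambda>j. j \<in> S \<inter> excited_qubits n k)"
      using assms(2) by (auto simp: excited_qubits_def fun_eq_iff)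
    then show ?thesis using B[OF that] by (simp add: G_def)
  qed
  then have "sector_trace n A m = (\<Sum>k\<in>sector n m. G (S \<inter> excited_qubits n k))" for m
    unfolding sector_trace_def using sector_subset by (intro sum.cong) auto
  then have "sector_trace n A m = (\<Sum>X | X \<subseteq> {..<n} \<and> card X = m. G (S \<inter> X))" for m
    by (simp add: sum_sector_excited_qubits[of "\<lambda>X. G (S \<inter> X)"])
  then show ?thesis using sum_subsets_local_identity[OF assms(2-4), of G] by simp
qed

lemma two_local_sector_trace_identity:
  assumes "two_local n A" "2 \<le> n"
  shows "sector_trace n A (n - 1) - sector_trace n A 1
      + of_nat (n - 2) * (sector_trace n A 0 - sector_trace n A n) = 0"
proof -
  let ?identity = "\<lambda>B. sector_trace n B (n - 1) - sector_trace n B 1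
      + of_nat (n - 2) * (sector_trace n B 0 - sector_trace n B n)"
  obtain N :: nat and terms S where
    terms: "\<forall>i<N. S i \<subseteq> {..<n} \<and> card (S i) \<le> 2 \<and> acts_only_on n (S i) (terms i)"
    and A: "\<forall>k<qdim n. \<forall>l<qdim n. A $$ (k,l) = (\<Sum>i<N. terms i $$ (k,l))"
    using assms(1) unfolding two_local_def by blast
  have "sector_trace n A m = (\<Sum>k\<in>sector n m. \<Sum>i<N. terms i $$ (k,k))" for m
    unfolding sector_trace_def using A sector_subset[of n m] by (intro sum.cong) auto
  then have split: "sector_trace n A m = (\<Sum>i<N. sector_trace n (terms i) m)" for m
    unfolding sector_trace_def by (simp add: sum.swap[of _ "sector n m"])
  have "?identity A = (\<Sum>i<N. ?identity (terms i))"
    unfolding split by (simp only: sum.distrib sum_subtractf sum_distrib_left right_diff_distrib)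
  also have "\<dots> = 0"
  proof (intro sum.neutral ballI)
    fix i assume "i \<in> {..<N}"
    with terms show "?identity (terms i) = 0"
      by (intro acts_only_on_sector_trace_identity[OF _ _ _ assms(2)]) auto
  qed
  finally show ?thesis .
qed

lemma time_ordered_exp_sector_minors:
  assumes V: "time_ordered_exp n T H V"
    and H: "\<And>t. t \<in> {0..T} \<Longrightarrow> H t \<in> carrier_mat (qdim n) (qdim n)"
    and u1: "\<And>t. t \<in> {0..T} \<Longrightarrow> u1_invariant n (H t)"
  obtains E where "finite E"
    and "\<And>m. continuous_on {0..T} (\<lambda>s. principal_minor (sector n m) (V s))"
    and "\<And>m. principal_minor (sector n m) (V 0) = 1"
    and "\<And>m t. t \<in> {0<..<T} - E \<Longrightarrow> ((\<lambda>s. principal_minor (sector n m) (V s)) has_vector_derivative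
        (- \<i> * sector_trace n (H t) m * principal_minor (sector n m) (V t))) (at t)"
proof -
  have V_carrier: "\<And>t. t \<in> {0..T} \<Longrightarrow> V t \<in> carrier_mat (qdim n) (qdim n)"
    and V_0: "V 0 = 1\<^sub>m (qdim n)"
    and V_cont: "\<And>k l. k < qdim n \<Longrightarrow> l < qdim n \<Longrightarrow> continuous_on {0..T} (\<lambda>s. V s $$ (k,l))"
    using V unfolding time_ordered_exp_def by auto
  obtain E where E: "finite E" and V_deriv: "\<And>t k l. t \<in> {0<..<T} - E \<Longrightarrow> k < qdim n \<Longrightarrow> l < qdim n \<Longrightarrow>
      ((\<lambda>s. V s $$ (k,l)) has_vector_derivative (- \<i> * (H t * V t) $$ (k,l))) (at t)"
    using V unfolding time_ordered_exp_def by blast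
  show thesis
  proof (rule that[OF E])
    show "continuous_on {0..T} (\<lambda>s. principal_minor (sector n m) (V s))" for m
      by (intro continuous_on_principal_minor V_cont sector_less_qdim)
    show "principal_minor (sector n m) (V 0) = 1" for m
      using principal_minor_one[OF sector_subset] by (simp add: V_0)
    fix m t assume t: "t \<in> {0<..<T} - E"
    then have "t \<in> {0..T}" by auto
    then show "((\<lambda>s. principal_minor (sector n m) (V s)) has_vector_derivative
        (- \<i> * sector_trace n (H t) m * principal_minor (sector n m) (V t))) (at t)"
      unfolding sector_trace_def
      using u1_invariant_block_diagonal[OF u1 H] V_deriv[OF t] sector_less_qdim
      by (intro has_vector_derivative_principal_minor[OF H V_carrier] sector_subset) auto
  qed
qed

theorem mainTheorem3:
  fixes n :: nat and T :: real and H V :: "real \<Rightarrow> complex mat"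
  assumes "n \<ge> 2" and "T \<ge> 0"
    and "\<And>t. t \<in> {0..T} \<Longrightarrow> H t \<in> carrier_mat (qdim n) (qdim n)"
    and "\<And>t. t \<in> {0..T} \<Longrightarrow> hermitian_op (H t)"
    and "\<And>t. t \<in> {0..T} \<Longrightarrow> u1_invariant n (H t)"
    and "\<And>t. t \<in> {0..T} \<Longrightarrow> two_local n (H t)"
    and "\<And>k l. k < qdim n \<Longrightarrow> l < qdim n \<Longrightarrow> piecewise_cont_on 0 T (\<lambda>t. H t $$ (k,l))"
    and "time_ordered_exp n T H V"
  shows "\<exists>z::int. Delta3 n (V T) = 2 * pi * of_int z"
proof -
  define d where "d m s = principal_minor (sector n m) (V s)" for m s
  define rate where "rate m t = - \<i> * sector_trace n (H t) m" for m t
  obtain E where E: "finite E" and d_cont: "\<And>m. continuous_on {0..T} (d m)"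
    and d_0: "\<And>m. d m 0 = 1"
    and d_deriv: "\<And>m t. t \<in> {0<..<T} - E \<Longrightarrow> (d m has_vector_derivative (rate m t * d m t)) (at t)"
    using time_ordered_exp_sector_minors[OF assms(8,3,5)] unfolding d_def rate_def by metis
  have rate_real: "cnj (rate m t) = - rate m t" if "t \<in> {0..T}" for m t
    using hermitian_sector_trace_real[OF assms(4,3)[OF that]] by (simp add: rate_def)
  have unit: "cmod (d m T) = 1" for m
    using E assms(2) d_cont d_0 d_deriv rate_real by (intro norm_eq_1_if_imaginary_rate) auto
  have "d (n - 1) T * cnj (d 1 T) * (d 0 T * cnj (d n T)) ^ (n - 2) = 1"
  proof (rule phase_product_eq_1[OF E assms(2) d_cont d_0 d_deriv])
    fix t assume "t \<in> {0<..<T} - E"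
    then have "t \<in> {0..T}" by auto
    then have "rate (n - 1) t + cnj (rate 1 t) + of_nat (n - 2) * (rate 0 t + cnj (rate n t))
        = - \<i> * (sector_trace n (H t) (n - 1) - sector_trace n (H t) 1
            + of_nat (n - 2) * (sector_trace n (H t) 0 - sector_trace n (H t) n))"
      using rate_real by (simp add: rate_def algebra_simps)
    then show "rate (n - 1) t + cnj (rate 1 t) + of_nat (n - 2) * (rate 0 t + cnj (rate n t)) = 0"
      using two_local_sector_trace_identity[OF assms(6)[OF \<open>t \<in> {0..T}\<close>] assms(1)] by simp
  qed
  from Arg_combination_in_2pi_Ints[OF unit unit unit unit this] obtain z :: int
    where "Arg (d (n - 1) T) - Arg (d 1 T) - real (n - 2) * (Arg (d n T) - Arg (d 0 T)) = 2 * pi * z" ..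
  moreover have "theta n (V T) m = Arg (d m T)" for m
    using assms(2,8) det_submatrix_eq_principal_minor[of "V T" "qdim n" "sector n m"] sector_subset[of n m]
    by (simp add: theta_def block_def d_def time_ordered_exp_def)
  ultimately show ?thesis
    using assms(1) by (auto simp: Delta3_def of_nat_diff)
qed

end
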